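(* Under the hypotheses of Proposition 2.1 (both singular and invertible components, $P$ primitive), the Markov operator $\mathcal{Q}$ is uniformly ergodic: there exist constants $C<\infty$ and $a>0$ such that for every $\mathcal{Q}$-stationary probability measure $\eta$, every $n\in\mathbb{N}$ and every $\varphi\in L^\infty(\mathscr{A}\times\mathbb{P}^1)$, $$\Big\|\mathcal{Q}^n\varphi-\int\varphi\,d\eta\Big\|_\infty\le C e^{-an}\|\varphi\|_\infty.$$
   Context: $\mathscr{A}=\{1,\dots,k\}=\mathscr{A}_{\mathrm{sing}}\sqcup\mathscr{A}_{\mathrm{inv}}$, both nonempty; $\underline A=(A_i)$ with $\mathrm{rank}A_i=1$ on $\mathscr{A}_{\mathrm{sing}}$ and $\mathrm{rank}A_i=2$ on $\mathscr{A}_{\mathrm{inv}}$. $P=(p_{ij})$ primitive left stochastic ($p_{ij}$ = probability of $j\to i$) with stationary vector $q$. Projective action: $\hat A\hat v=\widehat{Av}$ for invertible $A$, and for rank one $A$ the constant map to $\hat r$, $r=\mathrm{Range}(A)$. $L^\infty(\mathscr{A}\times\mathbb{P}^1)$: bounded measurable functions with sup norm. $(\mathcal{Q}\varphi)(j,\hat v)=\sum_i\varphi(i,\hat A_i\hat v)p_{ij}$; $\eta$ is $\mathcal{Q}$-stationary if $\int\mathcal{Q}\varphi\,d\eta=\int\varphi\,d\eta$ for all such $\varphi$. *)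

theory Defs
  imports "HOL-Analysis.Analysis" "HOL-Probability.Probability"
begin

text \<open>The projective line P^1 (lines through 0 in R^2) is parametrised by the angle
  theta in [0,pi): theta corresponds to the line spanned by (cos theta, sin theta).\<close>

definition P1 :: "real set" where
  "P1 = {0..<pi}"

definition dirv :: "real \<Rightarrow> real^2" where
  "dirv \<theta> = vector [cos \<theta>, sin \<theta>]"

definition line_of :: "real^2 \<Rightarrow> real" where
  "line_of w = (THE \<theta>. \<theta> \<in> P1 \<and> (\<exists>c. c \<noteq> 0 \<and> w = c *\<^sub>R dirv \<theta>))"

definition proj_act :: "real^2^2 \<Rightarrow> real \<Rightarrow> real" where
  "proj_act A \<theta> =
     (if rank A = 1 then line_of (SOME r. r \<noteq> 0 \<and> r \<in> range (\<lambda>x. A *v x))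
      else line_of (A *v dirv \<theta>))"

definition SP :: "nat \<Rightarrow> (nat \<times> real) measure" where
  "SP k = count_space {1..k} \<Otimes>\<^sub>M restrict_space borel P1"

definition Linf :: "nat \<Rightarrow> (nat \<times> real \<Rightarrow> real) set" where
  "Linf k = {\<phi>. \<phi> \<in> borel_measurable (SP k) \<and> bounded (\<phi> ` ({1..k} \<times> P1))}"

definition supnorm :: "nat \<Rightarrow> (nat \<times> real \<Rightarrow> real) \<Rightarrow> real" where
  "supnorm k \<phi> = (SUP x\<in>{1..k} \<times> P1. \<bar>\<phi> x\<bar>)"

text \<open>p i j = probability of j -> i (left stochastic).\<close>
definition left_stochastic :: "nat \<Rightarrow> (nat \<Rightarrow> nat \<Rightarrow> real) \<Rightarrow> bool" where
  "left_stochastic k p \<longleftrightarrow>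
     (\<forall>i\<in>{1..k}. \<forall>j\<in>{1..k}. p i j \<ge> 0) \<and> (\<forall>j\<in>{1..k}. (\<Sum>i\<in>{1..k}. p i j) = 1)"

fun mpow :: "nat \<Rightarrow> (nat \<Rightarrow> nat \<Rightarrow> real) \<Rightarrow> nat \<Rightarrow> nat \<Rightarrow> nat \<Rightarrow> real" where
  "mpow k p 0 i j = (if i = j then 1 else 0)"
| "mpow k p (Suc n) i j = (\<Sum>l\<in>{1..k}. p i l * mpow k p n l j)"

definition primitive :: "nat \<Rightarrow> (nat \<Rightarrow> nat \<Rightarrow> real) \<Rightarrow> bool" where
  "primitive k p \<longleftrightarrow> (\<exists>N. \<forall>i\<in>{1..k}. \<forall>j\<in>{1..k}. mpow k p N i j > 0)"

definition Qop :: "nat \<Rightarrow> (nat \<Rightarrow> real^2^2) \<Rightarrow> (nat \<Rightarrow> nat \<Rightarrow> real)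
    \<Rightarrow> (nat \<times> real \<Rightarrow> real) \<Rightarrow> (nat \<times> real \<Rightarrow> real)" where
  "Qop k A p \<phi> = (\<lambda>(j, \<theta>). \<Sum>i\<in>{1..k}. \<phi> (i, proj_act (A i) \<theta>) * p i j)"

definition Q_stationary :: "nat \<Rightarrow> (nat \<Rightarrow> real^2^2) \<Rightarrow> (nat \<Rightarrow> nat \<Rightarrow> real)
    \<Rightarrow> (nat \<times> real) measure \<Rightarrow> bool" where
  "Q_stationary k A p \<eta> \<longleftrightarrow> prob_space \<eta> \<and> sets \<eta> = sets (SP k) \<and>
     (\<forall>\<phi>\<in>Linf k. (\<integral>x. Qop k A p \<phi> x \<partial>\<eta>) = (\<integral>x. \<phi> x \<partial>\<eta>))"

end

theory Submission
  imports Defs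
begin

(* Doeblin's argument. A singular letter s sends all of P^1 to the single point hat r_s, and by
   primitivity of P there is an N such that a chain started anywhere is in s after N steps with
   probability at least some e > 0. So the N-step kernel from every (j, theta) dominates e times
   the point mass at (s, hat r_s), and Q^N contracts the oscillation of every bounded phi by the
   factor 1 - e. A stationary eta integrates Q^n phi to the integral of phi, which therefore lies in
   the range of Q^n phi, an interval whose length decays geometrically in n. *)

lemma dirv_nth [simp]: "dirv \<theta> $ 1 = cos \<theta>" "dirv \<theta> $ 2 = sin \<theta>"
  by (simp_all add: dirv_def)

lemma dirv_neq_0: "dirv \<theta> \<noteq> 0"
  by (metis dirv_nth sin_cos_squared_add zero_index zero_neq_one power2_eq_square mult_zero_left add_0)

lemma P1_dirv_inj:
  assumes "\<theta> \<in> P1" "\<theta>' \<in> P1" "c \<noteq> 0" "c *\<^sub>R dirv \<theta> = c' *\<^sub>R dirv \<theta>'"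
  shows "\<theta> = \<theta>'"
proof -
  have cos: "c * cos \<theta> = c' * cos \<theta>'" and sin: "c * sin \<theta> = c' * sin \<theta>'"
    using arg_cong[OF assms(4), of "\<lambda>v. v$1"] arg_cong[OF assms(4), of "\<lambda>v. v$2"] by auto
  have "c * sin (\<theta> - \<theta>') = (c * sin \<theta>) * cos \<theta>' - (c * cos \<theta>) * sin \<theta>'"
    by (simp add: sin_diff algebra_simps)
  also have "\<dots> = 0"
    unfolding cos sin by simp
  finally have "sin (\<theta> - \<theta>') = 0"
    using assms(3) by simp
  moreover have "- pi < \<theta> - \<theta>'" "\<theta> - \<theta>' < pi"
    using assms(1,2) by (auto simp: P1_def)
  ultimately show ?thesis
    using sin_eq_0_pi by force
qed

lemma line_of_scaleR_dirv:
  assumes "\<theta> \<in> P1" "c \<noteq> 0"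
  shows "line_of (c *\<^sub>R dirv \<theta>) = \<theta>"
  unfolding line_of_def
proof (rule the_equality)
  fix \<theta>' assume "\<theta>' \<in> P1 \<and> (\<exists>c'. c' \<noteq> 0 \<and> c *\<^sub>R dirv \<theta> = c' *\<^sub>R dirv \<theta>')"
  then show "\<theta>' = \<theta>"
    using P1_dirv_inj assms by metis
qed (use assms in blast)

text \<open>The line through w \<noteq> 0 with w$2 \<noteq> 0 has cotangent w$1 / w$2, and
  \<open>pi/2 - arctan\<close> inverts the cotangent on (0, pi).\<close>
lemma line_of_eq:
  assumes "w \<noteq> 0"
  shows "line_of w = (if w$2 = 0 then 0 else pi/2 - arctan (w$1 / w$2))"
proof (cases "w$2 = 0")
  case True
  then have "w = w$1 *\<^sub>R dirv 0" "w$1 \<noteq> 0"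
    using assms by (auto simp: vec_eq_iff forall_2)
  then show ?thesis
    using True line_of_scaleR_dirv[of 0 "w$1"] by (simp add: P1_def)
next
  case False
  define x where "x = w$1 / w$2"
  define \<theta> where "\<theta> = pi/2 - arctan x"
  have w1: "w$1 = w$2 * x"
    using False by (simp add: x_def)
  have x2: "1 + x\<^sup>2 \<noteq> 0"
    by (smt (verit) zero_le_power2)
  have "\<theta> \<in> P1"
    using arctan_bounded[of x] by (auto simp: P1_def \<theta>_def)
  moreover have "w = (w$2 * sqrt (1 + x\<^sup>2)) *\<^sub>R dirv \<theta>"
    using False by (simp add: vec_eq_iff forall_2 \<theta>_def cos_diff sin_diff cos_arctan sin_arctan w1 x2)
  moreover have "w$2 * sqrt (1 + x\<^sup>2) \<noteq> 0"
    using False x2 by simp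
  ultimately show ?thesis
    using False line_of_scaleR_dirv by (metis \<theta>_def x_def)
qed

lemma line_of_in_P1: "w \<noteq> 0 \<Longrightarrow> line_of w \<in> P1"
  using arctan_bounded[of "w$1 / w$2"] by (auto simp: line_of_eq P1_def)

lemma borel_measurable_line_of: "line_of \<in> borel_measurable borel"
proof -
  have "line_of = (\<lambda>w. if w = 0 then line_of 0 else if w$2 = 0 then 0 else pi/2 - arctan (w$1 / w$2))"
    by (auto simp: line_of_eq)
  also have "\<dots> \<in> borel_measurable borel"
    by measurable
  finally show ?thesis .
qed

lemma continuous_dirv: "continuous_on UNIV dirv"
proof -
  have eq: "dirv = (\<lambda>\<theta>. cos \<theta> *\<^sub>R axis 1 1 + sin \<theta> *\<^sub>R axis 2 1)"
    by (auto simp: fun_eq_iff vec_eq_iff forall_2 axis_def)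
  show ?thesis
    unfolding eq by (intro continuous_intros)
qed

lemma borel_measurable_proj_act: "proj_act B \<in> borel_measurable borel"
proof -
  have "(\<lambda>\<theta>. B *v dirv \<theta>) \<in> borel_measurable borel"
    by (intro borel_measurable_continuous_onI continuous_on_compose2[OF
          matrix_vector_mult_linear_continuous_on continuous_dirv]) auto
  then have "(\<lambda>\<theta>. line_of (B *v dirv \<theta>)) \<in> borel_measurable borel"
    using borel_measurable_line_of by (rule measurable_compose)
  then show ?thesis
    unfolding proj_act_def by (cases "rank B = 1") simp_all
qed

lemma rank_1_range_neq_0:
  assumes "rank (B::real^2^2) = 1"
  shows "\<exists>r. r \<noteq> 0 \<and> r \<in> range (\<lambda>x. B *v x)"
proof (rule ccontr)
  assume "\<not> ?thesis"
  then have "B = 0"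
    by (metis (mono_tags, lifting) matrix_eq matrix_vector_mult_0 rangeI)
  then show False
    using assms by simp
qed

lemma proj_act_rank_1_const: "rank B = 1 \<Longrightarrow> proj_act B \<theta> = proj_act B \<theta>'"
  by (simp add: proj_act_def)

lemma proj_act_in_P1:
  assumes "rank B = 1 \<or> rank B = 2"
  shows "proj_act B \<theta> \<in> P1"
proof (cases "rank B = 1")
  case True
  then show ?thesis
    using someI_ex[OF rank_1_range_neq_0[OF True]] by (simp add: proj_act_def line_of_in_P1)
next
  case False
  then have "inj ((*v) B)"
    using assms full_rank_injective[of B] by simp
  then have "B *v dirv \<theta> \<noteq> 0"
    using dirv_neq_0 by (metis injD matrix_vector_mult_0_right)
  then show ?thesis
    using False by (simp add: proj_act_def line_of_in_P1)
qed

lemma proj_act_measurable_P1: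
  assumes "rank B = 1 \<or> rank B = 2"
  shows "proj_act B \<in> restrict_space borel P1 \<rightarrow>\<^sub>M restrict_space borel P1"
  using proj_act_in_P1[OF assms]
  by (intro measurable_restrict_space1 measurable_restrict_space2 borel_measurable_proj_act) auto

definition osc_le :: "'a set \<Rightarrow> ('a \<Rightarrow> real) \<Rightarrow> real \<Rightarrow> bool" where
  "osc_le S f D \<longleftrightarrow> (\<exists>m. f ` S \<subseteq> {m..m + D})"

lemma osc_le_mono_range:
  assumes "osc_le S f D" and "\<And>m M. f ` S \<subseteq> {m..M} \<Longrightarrow> g ` S \<subseteq> {m..M}"
  shows "osc_le S g D"
  using assms unfolding osc_le_def by metis

lemma osc_le_funpow:
  assumes "\<And>f D. osc_le S f D \<Longrightarrow> osc_le S (T f) (r * D)"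
  shows "osc_le S f D \<Longrightarrow> osc_le S ((T ^^ n) f) (r ^ n * D)"
  by (induction n) (auto dest: assms simp: mult.assoc)

text \<open>The hypothesis \<open>minor\<close> is Doeblin's condition: the kernel of \<open>T\<close> at \<open>x\<close> dominates
  \<open>c x\<close> times the point mass at \<open>z\<close>.\<close>
lemma doeblin_osc_contraction:
  fixes T :: "('a \<Rightarrow> real) \<Rightarrow> 'a \<Rightarrow> real"
  assumes minor: "\<And>m M x. f ` S \<subseteq> {m..M} \<Longrightarrow> x \<in> S \<Longrightarrow>
      T f x - c x * f z \<in> {(1 - c x) * m .. (1 - c x) * M}"
    and "z \<in> S" "0 \<le> e" "\<And>x. x \<in> S \<Longrightarrow> e \<le> c x"
    and "osc_le S f D"
  shows "osc_le S (T f) ((1 - e) * D)"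
proof -
  obtain m where m: "f ` S \<subseteq> {m..m + D}"
    using assms(5) by (auto simp: osc_le_def)
  define F where "F = f z"
  have F: "m \<le> F" "F \<le> m + D"
    using m \<open>z \<in> S\<close> by (auto simp: F_def)
  have "T f x \<in> {e * F + (1 - e) * m .. e * F + (1 - e) * m + (1 - e) * D}" if "x \<in> S" for x
  proof -
    have "T f x - c x * F \<in> {(1 - c x) * m .. (1 - c x) * (m + D)}"
      using minor[OF m that] by (simp add: F_def)
    moreover have "(c x - e) * m \<le> (c x - e) * F" "(c x - e) * F \<le> (c x - e) * (m + D)"
      using F assms(4)[OF that] by (simp_all add: mult_left_mono)
    ultimately show ?thesis
      by (simp add: algebra_simps)
  qed
  then show ?thesis
    unfolding osc_le_def by blast
qed

lemma power_div_le_exp: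
  fixes \<beta> :: real and N n :: nat
  assumes "0 < \<beta>" "\<beta> \<le> 1" "0 < N"
  shows "\<beta> ^ (n div N) \<le> exp (ln \<beta> / N * n) / \<beta>"
proof -
  have "n \<le> Suc (n div N) * N"
    unfolding mult_Suc using div_mult_mod_eq[of n N] mod_less_divisor[OF assms(3), of n] by linarith
  then have "real n \<le> real (Suc (n div N) * N)"
    by (rule of_nat_mono)
  then have "real n / N \<le> Suc (n div N)"
    using assms(3) by (simp add: divide_le_eq algebra_simps)
  moreover have "ln \<beta> \<le> 0"
    using assms(1,2) by simp
  ultimately have "ln \<beta> * Suc (n div N) \<le> ln \<beta> / N * n"
    by (metis mult_left_mono_neg times_divide_eq_left times_divide_eq_right)
  have "\<beta> ^ Suc (n div N) = exp (ln \<beta> * Suc (n div N))"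
    using assms(1) by (metis exp_ln exp_of_nat_mult mult.commute)
  also have "\<dots> \<le> exp (ln \<beta> / N * n)"
    using \<open>ln \<beta> * Suc (n div N) \<le> ln \<beta> / N * n\<close> by simp
  finally show ?thesis
    using assms(1) by (simp add: field_simps)
qed

lemma (in prob_space) integral_in_interval:
  fixes g :: "'a \<Rightarrow> real"
  assumes "g \<in> borel_measurable M" "g ` space M \<subseteq> {a..b}"
  shows "(\<integral>x. g x \<partial>M) \<in> {a..b}"
proof -
  have "\<bar>g x\<bar> \<le> max \<bar>a\<bar> \<bar>b\<bar>" if "x \<in> space M" for x
    using assms(2) that by (auto simp: image_subset_iff)
  then have "integrable M g"
    using assms(1) by (intro integrable_const_bound[where B = "max \<bar>a\<bar> \<bar>b\<bar>"] AE_I2) auto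
  then show ?thesis
    using assms(2) by (auto intro!: integral_ge_const integral_le_const AE_I2)
qed

lemma abs_le_supnorm: "f \<in> Linf k \<Longrightarrow> x \<in> {1..k} \<times> P1 \<Longrightarrow> \<bar>f x\<bar> \<le> supnorm k f"
  unfolding Linf_def supnorm_def
  by (intro cSUP_upper) (auto simp: bounded_iff bdd_above_def)

lemma supnorm_le:
  assumes "1 \<le> k" "\<And>x. x \<in> {1..k} \<times> P1 \<Longrightarrow> \<bar>f x\<bar> \<le> B"
  shows "supnorm k f \<le> B"
proof -
  have "(1, 0) \<in> {1..k} \<times> P1"
    using assms(1) by (simp add: P1_def)
  then show ?thesis
    unfolding supnorm_def using assms(2) by (intro cSUP_least) auto
qed

lemma mpow_Suc_right:
  assumes "i \<in> {1..k}" "j \<in> {1..k}"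
  shows "mpow k p (Suc n) i j = (\<Sum>l\<in>{1..k}. mpow k p n i l * p l j)"
  using assms
proof (induction n arbitrary: i)
  case 0
  then show ?case
    by (simp add: if_distrib if_distribR sum.If_cases cong: if_cong)
next
  case (Suc n)
  have "mpow k p (Suc (Suc n)) i j = (\<Sum>l\<in>{1..k}. p i l * (\<Sum>m\<in>{1..k}. mpow k p n l m * p m j))"
    using Suc by simp
  also have "\<dots> = (\<Sum>m\<in>{1..k}. (\<Sum>l\<in>{1..k}. p i l * mpow k p n l m) * p m j)"
    by (simp add: sum_distrib_left sum_distrib_right mult.assoc) (rule sum.swap)
  finally show ?case
    by simp
qed

locale proj_markov =
  fixes k :: nat and A :: "nat \<Rightarrow> real^2^2" and p :: "nat \<Rightarrow> nat \<Rightarrow> real"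
  assumes ranks: "\<forall>i\<in>{1..k}. rank (A i) = 1 \<or> rank (A i) = 2"
    and stoch: "left_stochastic k p"
begin

abbreviation "Q \<equiv> Qop k A p"
abbreviation "S \<equiv> {1..k} \<times> P1"

lemma p_nonneg: "i \<in> {1..k} \<Longrightarrow> j \<in> {1..k} \<Longrightarrow> 0 \<le> p i j"
  using stoch by (auto simp: left_stochastic_def)

lemma p_sum: "j \<in> {1..k} \<Longrightarrow> (\<Sum>i\<in>{1..k}. p i j) = 1"
  using stoch by (auto simp: left_stochastic_def)

lemma act_in_P1: "i \<in> {1..k} \<Longrightarrow> proj_act (A i) \<theta> \<in> P1"
  using ranks proj_act_in_P1 by blast

lemma Q_shifted_bounds:
  assumes h: "\<And>i \<theta>. i \<in> {1..k} \<Longrightarrow> \<theta> \<in> P1 \<Longrightarrow>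
      h (i, proj_act (A i) \<theta>) - c i * F \<in> {(1 - c i) * m .. (1 - c i) * M}"
    and "j \<in> {1..k}" "\<theta> \<in> P1"
  defines "c' \<equiv> \<Sum>i\<in>{1..k}. c i * p i j"
  shows "Q h (j, \<theta>) - c' * F \<in> {(1 - c') * m .. (1 - c') * M}"
proof -
  have Q: "Q h (j, \<theta>) - c' * F = (\<Sum>i\<in>{1..k}. p i j * (h (i, proj_act (A i) \<theta>) - c i * F))"
    by (simp add: Qop_def c'_def sum_subtractf sum_distrib_left sum_distrib_right algebra_simps)
  have "(1 - c') * b = (\<Sum>i\<in>{1..k}. p i j * ((1 - c i) * b))" for b
    using p_sum[OF assms(2)]
    by (simp add: c'_def sum_subtractf sum_distrib_right algebra_simps flip: sum_distrib_left)
  moreover have "p i j * ((1 - c i) * m) \<le> p i j * (h (i, proj_act (A i) \<theta>) - c i * F)"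
    "p i j * (h (i, proj_act (A i) \<theta>) - c i * F) \<le> p i j * ((1 - c i) * M)" if "i \<in> {1..k}" for i
    using h[OF that assms(3)] p_nonneg[OF that assms(2)] by (simp_all add: mult_left_mono)
  ultimately show ?thesis
    unfolding Q by (auto intro!: sum_mono)
qed

lemma Q_range: "f ` S \<subseteq> {m..M} \<Longrightarrow> Q f ` S \<subseteq> {m..M}"
  using Q_shifted_bounds[of f "\<lambda>_. 0" 0 m M] act_in_P1 by fastforce

lemma Qpow_range: "f ` S \<subseteq> {m..M} \<Longrightarrow> (Q ^^ n) f ` S \<subseteq> {m..M}"
  by (induction n) (simp_all only: funpow_0 funpow.simps(2) o_apply Q_range)

text \<open>Whatever their starting direction, the chains that are in the singular letter \<open>s\<close> after
  \<open>Suc n\<close> steps all sit at the one point \<open>(s, proj_act (A s) 0)\<close>.\<close>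
lemma Qpow_minorization:
  assumes s: "s \<in> {1..k}" "rank (A s) = 1" and f: "f ` S \<subseteq> {m..M}"
    and "j \<in> {1..k}" "\<theta> \<in> P1"
  shows "(Q ^^ Suc n) f (j, \<theta>) - mpow k p (Suc n) s j * f (s, proj_act (A s) 0)
    \<in> {(1 - mpow k p (Suc n) s j) * m .. (1 - mpow k p (Suc n) s j) * M}"
  using assms(4,5)
proof (induction n arbitrary: j \<theta>)
  case 0
  define c where "c i = (if i = s then 1 else 0 :: real)" for i
  have bounds: "f (i, proj_act (A i) \<theta>') - c i * f (s, proj_act (A s) 0) \<in> {(1 - c i) * m .. (1 - c i) * M}"
    if "i \<in> {1..k}" "\<theta>' \<in> P1" for i \<theta>'
  proof (cases "i = s")
    case True
    then show ?thesis
      using proj_act_rank_1_const[OF s(2), of \<theta>' 0] by (simp add: c_def)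
  next
    case False
    have "f (i, proj_act (A i) \<theta>') \<in> {m..M}"
      using f act_in_P1[OF that(1)] that(1) by blast
    then show ?thesis
      using False by (simp add: c_def)
  qed
  have "(\<Sum>i\<in>{1..k}. c i * p i j) = mpow k p (Suc 0) s j"
    using s(1) 0 by (simp add: c_def if_distrib if_distribR sum.If_cases cong: if_cong)
  then show ?case
    using Q_shifted_bounds[of f c "f (s, proj_act (A s) 0)" m M, OF bounds 0] by simp
next
  case (Suc n)
  have "Q ((Q ^^ Suc n) f) (j, \<theta>) - (\<Sum>i\<in>{1..k}. mpow k p (Suc n) s i * p i j) * f (s, proj_act (A s) 0)
    \<in> {(1 - (\<Sum>i\<in>{1..k}. mpow k p (Suc n) s i * p i j)) * m
        .. (1 - (\<Sum>i\<in>{1..k}. mpow k p (Suc n) s i * p i j)) * M}"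
    using Suc.IH act_in_P1 by (intro Q_shifted_bounds Suc.prems) blast
  then show ?case
    by (simp only: mpow_Suc_right[OF s(1) Suc.prems(1), symmetric] funpow.simps(2) o_apply)
qed

lemma Qpow_osc_contraction:
  assumes s: "s \<in> {1..k}" "rank (A s) = 1"
    and e: "0 \<le> e" "\<forall>j\<in>{1..k}. e \<le> mpow k p (Suc N) s j"
  shows "osc_le S f D \<Longrightarrow> osc_le S ((Q ^^ Suc N) f) ((1 - e) * D)"
  by (rule doeblin_osc_contraction[where c = "\<lambda>x. mpow k p (Suc N) s (fst x)"
        and z = "(s, proj_act (A s) 0)"])
    (use Qpow_minorization[OF s] act_in_P1[OF s(1)] s(1) e in auto)

lemma Qpow_osc_decay:
  assumes s: "s \<in> {1..k}" "rank (A s) = 1"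
    and e: "0 \<le> e" "\<forall>j\<in>{1..k}. e \<le> mpow k p (Suc N) s j"
    and f: "osc_le S f D"
  shows "osc_le S ((Q ^^ n) f) ((1 - e) ^ (n div Suc N) * D)"
proof -
  have "osc_le S (((Q ^^ Suc N) ^^ (n div Suc N)) f) ((1 - e) ^ (n div Suc N) * D)"
    using Qpow_osc_contraction[OF s e] f by (rule osc_le_funpow)
  then have "osc_le S ((Q ^^ (n mod Suc N)) ((Q ^^ (Suc N * (n div Suc N))) f))
      ((1 - e) ^ (n div Suc N) * D)"
    unfolding funpow_mult by (rule osc_le_mono_range) (rule Qpow_range)
  moreover have "Q ^^ n = Q ^^ (n mod Suc N + Suc N * (n div Suc N))"
    by (simp only: mod_mult_div_eq)
  ultimately show ?thesis
    by (simp only: funpow_add o_apply)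
qed

lemma primitive_doeblin_weight:
  assumes "primitive k p" "s \<in> {1..k}"
  obtains N e where "0 < e" "e < 1" "\<forall>j\<in>{1..k}. e \<le> mpow k p (Suc N) s j"
proof -
  obtain N where N: "\<forall>i\<in>{1..k}. \<forall>j\<in>{1..k}. 0 < mpow k p N i j"
    using assms(1) by (auto simp: primitive_def)
  have pos: "0 < mpow k p (Suc N) s j" if j: "j \<in> {1..k}" for j
  proof -
    have "\<exists>l\<in>{1..k}. 0 < p l j"
    proof (rule ccontr)
      assume "\<not> ?thesis"
      then have "(\<Sum>l\<in>{1..k}. p l j) \<le> 0"
        by (intro sum_nonpos) (auto simp: not_less)
      then show False
        using p_sum[OF j] by simp
    qed
    then obtain l where l: "l \<in> {1..k}" "0 < p l j"
      by blast
    have "0 \<le> mpow k p N s i * p i j" if "i \<in> {1..k}" for i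
      using N assms(2) that p_nonneg[OF that j] by (meson less_imp_le mult_nonneg_nonneg)
    then have "0 < (\<Sum>l\<in>{1..k}. mpow k p N s l * p l j)"
      using N assms(2) l by (intro sum_pos2[OF _ l(1)]) auto
    then show ?thesis
      by (simp only: mpow_Suc_right[OF assms(2) j])
  qed
  define e where "e = min (Min ((\<lambda>j. mpow k p (Suc N) s j) ` {1..k})) (1/2)"
  have "0 < Min ((\<lambda>j. mpow k p (Suc N) s j) ` {1..k})"
    using pos assms(2) by (subst Min_gr_iff) auto
  then have "0 < e" "e < 1"
    by (simp_all add: e_def)
  moreover have "\<forall>j\<in>{1..k}. e \<le> mpow k p (Suc N) s j"
    unfolding e_def by (auto intro: min.coboundedI1 Min_le)
  ultimately show ?thesis
    using that by blast
qed

lemma space_SP: "space (SP k) = S"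
  by (simp add: SP_def space_pair_measure space_restrict_space)

lemma Q_measurable:
  assumes f: "f \<in> borel_measurable (SP k)"
  shows "Q f \<in> borel_measurable (SP k)"
proof -
  have "(\<lambda>x. f (i, proj_act (A i) (snd x)) * p i (fst x)) \<in> borel_measurable (SP k)"
    if i: "i \<in> {1..k}" for i
  proof -
    have "(\<lambda>x. (i, proj_act (A i) (snd x))) \<in> SP k \<rightarrow>\<^sub>M SP k"
      unfolding SP_def using i ranks
      by (intro measurable_Pair measurable_compose[OF measurable_snd proj_act_measurable_P1]) auto
    then have "(\<lambda>x. f (i, proj_act (A i) (snd x))) \<in> borel_measurable (SP k)"
      using f by (rule measurable_compose)
    moreover have "(\<lambda>x. p i (fst x)) \<in> borel_measurable (SP k)"
      unfolding SP_def by (rule measurable_compose[OF measurable_fst]) simp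
    ultimately show ?thesis
      by (rule borel_measurable_times)
  qed
  then have "(\<lambda>x. \<Sum>i\<in>{1..k}. f (i, proj_act (A i) (snd x)) * p i (fst x)) \<in> borel_measurable (SP k)"
    by (rule borel_measurable_sum)
  moreover have "Q f = (\<lambda>x. \<Sum>i\<in>{1..k}. f (i, proj_act (A i) (snd x)) * p i (fst x))"
    by (auto simp: fun_eq_iff Qop_def)
  ultimately show ?thesis
    by simp
qed

lemma Q_Linf: "f \<in> Linf k \<Longrightarrow> Q f \<in> Linf k"
proof -
  assume f: "f \<in> Linf k"
  have "f ` S \<subseteq> {- supnorm k f .. supnorm k f}"
    using abs_le_supnorm[OF f] by (force simp: abs_le_iff)
  then have "Q f ` S \<subseteq> {- supnorm k f .. supnorm k f}"
    by (rule Q_range)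
  then have "bounded (Q f ` S)"
    by (rule bounded_subset[OF bounded_closed_interval])
  then show ?thesis
    using f Q_measurable by (simp add: Linf_def)
qed

lemma Qpow_Linf: "f \<in> Linf k \<Longrightarrow> (Q ^^ n) f \<in> Linf k"
  by (induction n) (simp_all add: Q_Linf)

lemma stationary_integral_Qpow:
  assumes "Q_stationary k A p \<eta>" "f \<in> Linf k"
  shows "(\<integral>x. (Q ^^ n) f x \<partial>\<eta>) = (\<integral>x. f x \<partial>\<eta>)"
  using assms Qpow_Linf[OF assms(2)] by (induction n) (simp_all add: Q_stationary_def)

lemma Qpow_minus_integral_le:
  assumes s: "s \<in> {1..k}" "rank (A s) = 1"
    and e: "0 \<le> e" "\<forall>j\<in>{1..k}. e \<le> mpow k p (Suc N) s j"
    and \<eta>: "Q_stationary k A p \<eta>" and \<phi>: "\<phi> \<in> Linf k"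
  shows "supnorm k (\<lambda>x. (Q ^^ n) \<phi> x - (\<integral>y. \<phi> y \<partial>\<eta>))
    \<le> (1 - e) ^ (n div Suc N) * (2 * supnorm k \<phi>)"
proof -
  define D where "D = (1 - e) ^ (n div Suc N) * (2 * supnorm k \<phi>)"
  have "osc_le S \<phi> (2 * supnorm k \<phi>)"
    unfolding osc_le_def using abs_le_supnorm[OF \<phi>]
    by (intro exI[of _ "- supnorm k \<phi>"]) (force simp: abs_le_iff)
  then have "osc_le S ((Q ^^ n) \<phi>) D"
    unfolding D_def by (rule Qpow_osc_decay[OF s e])
  then obtain m where m: "(Q ^^ n) \<phi> ` S \<subseteq> {m..m + D}"
    unfolding osc_le_def by blast
  interpret \<eta>: prob_space \<eta>
    using \<eta> by (simp add: Q_stationary_def)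
  have sets: "sets \<eta> = sets (SP k)"
    using \<eta> by (simp add: Q_stationary_def)
  have "(\<integral>y. (Q ^^ n) \<phi> y \<partial>\<eta>) \<in> {m..m + D}"
    using Qpow_Linf[OF \<phi>, of n] m sets_eq_imp_space_eq[OF sets]
    by (intro \<eta>.integral_in_interval) (simp_all add: Linf_def measurable_cong_sets[OF sets] space_SP)
  then have "(\<integral>y. \<phi> y \<partial>\<eta>) \<in> {m..m + D}"
    using stationary_integral_Qpow[OF \<eta> \<phi>] by simp
  then have "\<bar>(Q ^^ n) \<phi> x - (\<integral>y. \<phi> y \<partial>\<eta>)\<bar> \<le> D" if "x \<in> S" for x
    using m[THEN subsetD, OF imageI[OF that]] by (simp add: abs_le_iff)
  then show ?thesis
    unfolding D_def[symmetric] using s(1) by (intro supnorm_le) auto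
qed

end

theorem theorem2p1:
  fixes k :: nat and A :: "nat \<Rightarrow> real^2^2" and p :: "nat \<Rightarrow> nat \<Rightarrow> real"
  assumes ranks: "\<forall>i\<in>{1..k}. rank (A i) = 1 \<or> rank (A i) = 2"
    and sing: "\<exists>i\<in>{1..k}. rank (A i) = 1"
    and inv: "\<exists>i\<in>{1..k}. rank (A i) = 2"
    and stoch: "left_stochastic k p"
    and prim: "primitive k p"
  shows "\<exists>C a. a > 0 \<and>
    (\<forall>\<eta>. Q_stationary k A p \<eta> \<longrightarrow>
      (\<forall>n::nat. \<forall>\<phi>\<in>Linf k.
         supnorm k (\<lambda>x. (Qop k A p ^^ n) \<phi> x - (\<integral>y. \<phi> y \<partial>\<eta>))
           \<le> C * exp (- a * real n) * supnorm k \<phi>))"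
proof -
  interpret proj_markov k A p
    using ranks stoch by unfold_locales
  obtain s where s: "s \<in> {1..k}" "rank (A s) = 1"
    using sing by blast
  obtain N e where e: "0 < e" "e < 1" "\<forall>j\<in>{1..k}. e \<le> mpow k p (Suc N) s j"
    using primitive_doeblin_weight[OF prim s(1)] by blast
  define \<beta> where "\<beta> = 1 - e"
  have \<beta>: "0 < \<beta>" "\<beta> \<le> 1" "ln \<beta> < 0"
    using e by (simp_all add: \<beta>_def)
  show ?thesis
  proof (intro exI conjI allI impI ballI)
    show "0 < - ln \<beta> / Suc N"
      using \<beta>(3) by (simp add: divide_neg_pos)
    fix \<eta> n \<phi> assume \<eta>: "Q_stationary k A p \<eta>" and \<phi>: "\<phi> \<in> Linf k"
    have "0 \<le> supnorm k \<phi>"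
      using abs_le_supnorm[OF \<phi>, of "(s, 0)"] s(1) by (simp add: P1_def)
    have "supnorm k (\<lambda>x. (Q ^^ n) \<phi> x - (\<integral>y. \<phi> y \<partial>\<eta>)) \<le> \<beta> ^ (n div Suc N) * (2 * supnorm k \<phi>)"
      using Qpow_minus_integral_le[OF s less_imp_le[OF e(1)] e(3) \<eta> \<phi>] by (simp add: \<beta>_def)
    also have "\<dots> \<le> exp (ln \<beta> / Suc N * n) / \<beta> * (2 * supnorm k \<phi>)"
      using power_div_le_exp[OF \<beta>(1,2), of "Suc N" n] \<open>0 \<le> supnorm k \<phi>\<close>
      by (intro mult_right_mono) auto
    also have "\<dots> = 2 / \<beta> * exp (- (- ln \<beta> / Suc N) * n) * supnorm k \<phi>"
      by simp
    finally show "supnorm k (\<lambda>x. (Q ^^ n) \<phi> x - (\<integral>y. \<phi> y \<partial>\<eta>))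
      \<le> 2 / \<beta> * exp (- (- ln \<beta> / Suc N) * n) * supnorm k \<phi>" .
  qed
qed

end
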